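(* Let $F$ be a global function field with full constant field $k=\mathbb{F}_q$, let $x\in F$ be transcendental over $k$ with $n=[F:k(x)]$ and $\gcd(n,q)=1$, and let $S=\{P_1,\dots,P_{|S|}\}$ be a finite set of places of $F$ containing all infinite places of $F/k(x)$. Let $M_S\in\mathbb{Z}^{(|S|-1)\times|S|}$ be an integer matrix whose rows form an LLL-reduced basis of the $S$-unit valuation lattice $\Lambda_S'$ (this is the output of the paper's algorithm SValMat on input $S$). Then \[ \|M_S\|_\infty:=\max_{i,j}|(M_S)_{ij}| \le 2^{(|S|-1)(|S|-2)/4}\,R_S'. \]
   Context: The infinite places of $F/k(x)$ are the poles of $x$. For a finite set $S$ of places containing all infinite places, $O_S^\times$ denotes the group of $S$-units of $F$ (elements whose divisor is supported on $S$). With a fixed ordering $P_1,\dots,P_{|S|}$ of $S$, let $\phi_S:F^\times\to\mathbb{Z}^{|S|}$, $\alpha\mapsto(-v_{P_1}(\alpha),\dots,-v_{P_{|S|}}(\alpha))$, where $v_P$ is the normalized discrete valuation at $P$. The $S$-unit valuation lattice is $\Lambda_S'=\phi_S(O_S^\times)$, a lattice of rank $|S|-1$ in $\mathbb{Z}^{|S|}$, and $R_S'=\det\Lambda_S'$ is its determinant (covolume). LLL-reduced is meant in the sense of Lenstra–Lenstra–Lovász. *)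

theory Defs
  imports Complex_Main "HOL-Computational_Algebra.Polynomial" "HOL-Combinatorics.Permutations"
begin

text \<open>The global function field F is the ambient field type 'f (F = UNIV);
  the constant field k is a subset K of it.\<close>

definition subfield :: "'f::field set \<Rightarrow> bool" where
  "subfield K \<longleftrightarrow> 0 \<in> K \<and> 1 \<in> K \<and>
     (\<forall>a\<in>K. \<forall>b\<in>K. a + b \<in> K \<and> a * b \<in> K) \<and>
     (\<forall>a\<in>K. - a \<in> K \<and> inverse a \<in> K)"

definition poly_over :: "'f::field set \<Rightarrow> 'f poly \<Rightarrow> bool" where
  "poly_over K p \<longleftrightarrow> (\<forall>i. coeff p i \<in> K)"

definition algebraic_over :: "'f::field set \<Rightarrow> 'f \<Rightarrow> bool" where
  "algebraic_over K a \<longleftrightarrow> (\<exists>p. p \<noteq> 0 \<and> poly_over K p \<and> poly p a = 0)"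

definition rat_fun_field :: "'f::field set \<Rightarrow> 'f \<Rightarrow> 'f set" where
  "rat_fun_field K x = {poly p x / poly q x | p q. poly_over K p \<and> poly_over K q \<and> poly q x \<noteq> 0}"

definition has_degree_over :: "'f::field set \<Rightarrow> nat \<Rightarrow> bool" where
  "has_degree_over L n \<longleftrightarrow> (\<exists>bs::'f list. length bs = n \<and>
     (\<forall>c. (\<forall>i<n. c i \<in> L) \<and> (\<Sum>i<n. c i * bs ! i) = 0 \<longrightarrow> (\<forall>i<n. c i = 0)) \<and>
     (\<forall>a. \<exists>c. (\<forall>i<n. c i \<in> L) \<and> a = (\<Sum>i<n. c i * bs ! i)))"

text \<open>Places of F/k are identified with their normalized discrete valuations
  v : F \<Rightarrow> int (trivial on k), with the convention v 0 = 0.\<close>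
definition norm_val :: "'f::field set \<Rightarrow> ('f \<Rightarrow> int) \<Rightarrow> bool" where
  "norm_val K v \<longleftrightarrow> v 0 = 0 \<and>
     (\<forall>a b. a \<noteq> 0 \<longrightarrow> b \<noteq> 0 \<longrightarrow> v (a * b) = v a + v b) \<and>
     (\<forall>a b. a \<noteq> 0 \<longrightarrow> b \<noteq> 0 \<longrightarrow> a + b \<noteq> 0 \<longrightarrow> v (a + b) \<ge> min (v a) (v b)) \<and>
     (\<exists>t. t \<noteq> 0 \<and> v t = 1) \<and>
     (\<forall>c\<in>K. c \<noteq> 0 \<longrightarrow> v c = 0)"

definition S_units :: "'f::field set \<Rightarrow> ('f \<Rightarrow> int) list \<Rightarrow> 'f set" where
  "S_units K Ps = {\<alpha>. \<alpha> \<noteq> 0 \<and> (\<forall>v. norm_val K v \<and> v \<notin> set Ps \<longrightarrow> v \<alpha> = 0)}"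

text \<open>phi_S, vectors in Z^|S| represented as nat \<Rightarrow> int, zero outside {..<|S|}.\<close>
definition phi_S :: "('f \<Rightarrow> int) list \<Rightarrow> 'f \<Rightarrow> (nat \<Rightarrow> int)" where
  "phi_S Ps \<alpha> = (\<lambda>i. if i < length Ps then - (Ps ! i) \<alpha> else 0)"

definition S_unit_val_lattice :: "'f::field set \<Rightarrow> ('f \<Rightarrow> int) list \<Rightarrow> (nat \<Rightarrow> int) set" where
  "S_unit_val_lattice K Ps = phi_S Ps ` S_units K Ps"

text \<open>Lattices: B i (i < r) are the basis vectors.\<close>
definition int_comb :: "nat \<Rightarrow> (nat \<Rightarrow> nat \<Rightarrow> int) \<Rightarrow> (nat \<Rightarrow> int) \<Rightarrow> (nat \<Rightarrow> int)" where
  "int_comb r B c = (\<lambda>j. \<Sum>i<r. c i * B i j)"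

definition is_lattice_basis :: "(nat \<Rightarrow> int) set \<Rightarrow> nat \<Rightarrow> (nat \<Rightarrow> nat \<Rightarrow> int) \<Rightarrow> bool" where
  "is_lattice_basis L r B \<longleftrightarrow> (\<forall>i<r. B i \<in> L) \<and>
     (\<forall>c. int_comb r B c = (\<lambda>j. 0) \<longrightarrow> (\<forall>i<r. c i = 0)) \<and>
     (\<forall>w\<in>L. \<exists>c. w = int_comb r B c)"

definition ip :: "nat \<Rightarrow> (nat \<Rightarrow> real) \<Rightarrow> (nat \<Rightarrow> real) \<Rightarrow> real" where
  "ip m u w = (\<Sum>k<m. u k * w k)"

definition rvec :: "(nat \<Rightarrow> nat \<Rightarrow> int) \<Rightarrow> nat \<Rightarrow> (nat \<Rightarrow> real)" where
  "rvec B i = (\<lambda>k. real_of_int (B i k))"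

text \<open>Gram--Schmidt orthogonalisation: gso m B i = [b*_0, ..., b*_(i-1)].\<close>
primrec gso :: "nat \<Rightarrow> (nat \<Rightarrow> nat \<Rightarrow> int) \<Rightarrow> nat \<Rightarrow> (nat \<Rightarrow> real) list" where
  "gso m B 0 = []"
| "gso m B (Suc i) = (let prev = gso m B i in
     prev @ [(\<lambda>k. rvec B i k - (\<Sum>j<i. ip m (rvec B i) (prev ! j) / ip m (prev ! j) (prev ! j) * (prev ! j) k))])"

definition gs :: "nat \<Rightarrow> (nat \<Rightarrow> nat \<Rightarrow> int) \<Rightarrow> nat \<Rightarrow> (nat \<Rightarrow> real)" where
  "gs m B i = gso m B (Suc i) ! i"

definition gs_mu :: "nat \<Rightarrow> (nat \<Rightarrow> nat \<Rightarrow> int) \<Rightarrow> nat \<Rightarrow> nat \<Rightarrow> real" where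
  "gs_mu m B i j = ip m (rvec B i) (gs m B j) / ip m (gs m B j) (gs m B j)"

definition LLL_reduced :: "nat \<Rightarrow> nat \<Rightarrow> (nat \<Rightarrow> nat \<Rightarrow> int) \<Rightarrow> bool" where
  "LLL_reduced m r B \<longleftrightarrow>
     (\<forall>i<r. \<forall>j<i. \<bar>gs_mu m B i j\<bar> \<le> 1/2) \<and>
     (\<forall>i. 0 < i \<and> i < r \<longrightarrow>
        ip m (gs m B i) (gs m B i) \<ge> (3/4 - (gs_mu m B i (i - 1))^2) * ip m (gs m B (i - 1)) (gs m B (i - 1)))"

definition gram_det :: "nat \<Rightarrow> nat \<Rightarrow> (nat \<Rightarrow> nat \<Rightarrow> int) \<Rightarrow> real" where
  "gram_det m r B = (\<Sum>p \<in> {p. p permutes {..<r}}. of_int (sign p) * (\<Prod>i<r. ip m (rvec B i) (rvec B (p i))))"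

definition lattice_det :: "nat \<Rightarrow> (nat \<Rightarrow> int) set \<Rightarrow> real" where
  "lattice_det m L = (THE d. \<exists>r B. is_lattice_basis L r B \<and> d = sqrt (gram_det m r B))"

end

theory Submission
  imports Defs "Jordan_Normal_Form.Determinant"
begin

text \<open>Size reduction and the Lovasz condition give \<open>\<parallel>b\<^sub>j\<^sup>*\<parallel>\<^sup>2 \<le> 2\<^bsup>i-j\<^esup> \<parallel>b\<^sub>i\<^sup>*\<parallel>\<^sup>2\<close> for \<open>j \<le> i\<close>,
  hence \<open>\<parallel>b\<^sub>i\<parallel>\<^sup>2 \<le> 2\<^sup>i \<parallel>b\<^sub>i\<^sup>*\<parallel>\<^sup>2\<close>. Since \<open>b\<^sub>0 = b\<^sub>0\<^sup>*\<close> is a nonzero integer vector, every factor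
  \<open>2\<^sup>k \<parallel>b\<^sub>k\<^sup>*\<parallel>\<^sup>2\<close> is at least 1, so \<open>\<parallel>b\<^sub>i\<parallel>\<^sup>2 \<le> \<Prod>\<^sub>k 2\<^sup>k \<parallel>b\<^sub>k\<^sup>*\<parallel>\<^sup>2 = 2\<^bsup>r(r-1)/2\<^esup> det G\<close>, where the
  Gram determinant \<open>det G\<close> is the squared covolume; it does not depend on the basis because two
  bases differ by a unimodular matrix.\<close>

lemma ip_commute: "ip m u w = ip m w u"
  by (simp add: ip_def mult.commute)

lemma ip_self_nonneg: "0 \<le> ip m u u"
  unfolding ip_def by (intro sum_nonneg) auto

lemma ip_eq_0_if_self_eq_0:
  assumes "ip m u u = 0"
  shows "ip m w u = 0"
proof -
  have "\<forall>k\<in>{..<m}. u k * u k = 0"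
    using assms unfolding ip_def by (subst sum_nonneg_eq_0_iff[symmetric]) auto
  then show ?thesis unfolding ip_def by simp
qed

lemma ip_diff_sum_left:
  "ip m (\<lambda>k. a k - (\<Sum>j\<in>J. c j * v j k)) w = ip m a w - (\<Sum>j\<in>J. c j * ip m (v j) w)"
  unfolding ip_def
  by (simp add: sum_subtractf left_diff_distrib sum_distrib_left sum_distrib_right mult.assoc
      sum.swap[of _ J])

lemma sq_le_ip_rvec:
  assumes "k < m"
  shows "(real_of_int (B i k))\<^sup>2 \<le> ip m (rvec B i) (rvec B i)"
  unfolding ip_def rvec_def power2_eq_square
  using assms by (intro member_le_sum) auto

subsection \<open>Gram--Schmidt orthogonalisation\<close>

lemma length_gso: "length (gso m B i) = i"
  by (induction i) (auto simp: Let_def)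

lemma gso_nth: "j < i \<Longrightarrow> gso m B i ! j = gs m B j"
proof (induction i)
  case (Suc i)
  then consider "j < i" | "j = i" by linarith
  then show ?case
    using Suc by cases (simp_all add: Let_def nth_append length_gso gs_def)
qed simp

lemma gs_recursion: "gs m B i = (\<lambda>k. rvec B i k - (\<Sum>j<i. gs_mu m B i j * gs m B j k))"
proof -
  have "gs m B i = (\<lambda>k. rvec B i k - (\<Sum>j<i. ip m (rvec B i) (gso m B i ! j)
      / ip m (gso m B i ! j) (gso m B i ! j) * (gso m B i ! j) k))"
    by (simp add: gs_def Let_def nth_append length_gso)
  then show ?thesis
    by (simp add: gso_nth gs_mu_def)
qed

lemma gs_0: "gs m B 0 = rvec B 0"
  by (subst gs_recursion) simp

lemma gs_orthogonal: "j < i \<Longrightarrow> ip m (gs m B i) (gs m B j) = 0"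
proof (induction i arbitrary: j rule: less_induct)
  case (less i)
  have orth: "ip m (gs m B l) (gs m B j) = 0" if "l < i" "l \<noteq> j" for l
    using less.IH[of j l] less.IH[of l j] less.prems that
    by (cases "l < j") (auto simp: ip_commute)
  have "ip m (gs m B i) (gs m B j)
      = ip m (rvec B i) (gs m B j) - (\<Sum>l<i. gs_mu m B i l * ip m (gs m B l) (gs m B j))"
    by (subst gs_recursion) (rule ip_diff_sum_left)
  also have "(\<Sum>l<i. gs_mu m B i l * ip m (gs m B l) (gs m B j))
      = gs_mu m B i j * ip m (gs m B j) (gs m B j)"
    using less.prems orth by (subst sum.remove[of _ j]) (auto intro!: sum.neutral)
  finally show ?case
    by (cases "ip m (gs m B j) (gs m B j) = 0") (auto simp: gs_mu_def ip_eq_0_if_self_eq_0)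
qed

definition gs_coeff :: "nat \<Rightarrow> (nat \<Rightarrow> nat \<Rightarrow> int) \<Rightarrow> nat \<Rightarrow> nat \<Rightarrow> real" where
  "gs_coeff m B i j = (if j < i then gs_mu m B i j else if j = i then 1 else 0)"

lemma rvec_eq_sum_gs:
  assumes "i < r"
  shows "rvec B i k = (\<Sum>j<r. gs_coeff m B i j * gs m B j k)"
proof -
  have "(\<Sum>j<r. gs_coeff m B i j * gs m B j k) = (\<Sum>j<Suc i. gs_coeff m B i j * gs m B j k)"
    using assms by (intro sum.mono_neutral_right) (auto simp: gs_coeff_def)
  also have "\<dots> = gs m B i k + (\<Sum>j<i. gs_mu m B i j * gs m B j k)"
    by (simp add: gs_coeff_def)
  finally show ?thesis
    by (subst (asm) gs_recursion) simp
qed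

subsection \<open>Matrix form of Gram--Schmidt and the Gram determinant\<close>

definition basis_mat :: "nat \<Rightarrow> nat \<Rightarrow> (nat \<Rightarrow> nat \<Rightarrow> int) \<Rightarrow> 'a::ring_1 mat" where
  "basis_mat m r B = mat r m (\<lambda>(i, k). of_int (B i k))"

definition gs_mat :: "nat \<Rightarrow> nat \<Rightarrow> (nat \<Rightarrow> nat \<Rightarrow> int) \<Rightarrow> real mat" where
  "gs_mat m r B = mat r m (\<lambda>(i, k). gs m B i k)"

definition gs_coeff_mat :: "nat \<Rightarrow> nat \<Rightarrow> (nat \<Rightarrow> nat \<Rightarrow> int) \<Rightarrow> real mat" where
  "gs_coeff_mat m r B = mat r r (\<lambda>(i, j). gs_coeff m B i j)"

definition gs_sqnorm_mat :: "nat \<Rightarrow> nat \<Rightarrow> (nat \<Rightarrow> nat \<Rightarrow> int) \<Rightarrow> real mat" where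
  "gs_sqnorm_mat m r B = mat r r (\<lambda>(i, j). if i = j then ip m (gs m B i) (gs m B i) else 0)"

lemma gs_mats_carrier [simp]:
  "basis_mat m r B \<in> carrier_mat r m" "gs_mat m r B \<in> carrier_mat r m"
  "gs_coeff_mat m r B \<in> carrier_mat r r" "gs_sqnorm_mat m r B \<in> carrier_mat r r"
  by (auto simp: basis_mat_def gs_mat_def gs_coeff_mat_def gs_sqnorm_mat_def)

lemma basis_mat_eq_gs_coeff_mat_mult: "basis_mat m r B = gs_coeff_mat m r B * gs_mat m r B"
  by (rule eq_matI)
    (auto simp: basis_mat_def gs_mat_def gs_coeff_mat_def scalar_prod_def atLeast0LessThan
      rvec_eq_sum_gs[unfolded rvec_def])

lemma gs_mat_mult_transpose: "gs_mat m r B * transpose_mat (gs_mat m r B) = gs_sqnorm_mat m r B"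
proof (rule eq_matI)
  fix i j assume "i < dim_row (gs_sqnorm_mat m r B)" "j < dim_col (gs_sqnorm_mat m r B)"
  then have ij: "i < r" "j < r" by (auto simp: gs_sqnorm_mat_def)
  then have "(gs_mat m r B * transpose_mat (gs_mat m r B)) $$ (i, j) = ip m (gs m B i) (gs m B j)"
    by (simp add: gs_mat_def scalar_prod_def atLeast0LessThan ip_def)
  also have "\<dots> = gs_sqnorm_mat m r B $$ (i, j)"
    using ij gs_orthogonal[of j i m B] gs_orthogonal[of i j m B]
    by (cases "i = j") (auto simp: gs_sqnorm_mat_def ip_commute linorder_neq_iff)
  finally show "(gs_mat m r B * transpose_mat (gs_mat m r B)) $$ (i, j) = gs_sqnorm_mat m r B $$ (i, j)" .
qed (auto simp: gs_mat_def gs_sqnorm_mat_def)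

lemma gram_mat_eq_LDL:
  "(basis_mat m r B :: real mat) * transpose_mat (basis_mat m r B)
    = gs_coeff_mat m r B * gs_sqnorm_mat m r B * transpose_mat (gs_coeff_mat m r B)"
proof -
  let ?L = "gs_coeff_mat m r B" and ?G = "gs_mat m r B"
  have "(basis_mat m r B :: real mat) * transpose_mat (basis_mat m r B)
      = (?L * ?G) * (transpose_mat ?G * transpose_mat ?L)"
    by (simp add: basis_mat_eq_gs_coeff_mat_mult transpose_mult[of _ r r _ m])
  also have "\<dots> = ?L * (?G * transpose_mat ?G) * transpose_mat ?L"
  proof -
    have "(?L * ?G) * (transpose_mat ?G * transpose_mat ?L) = ?L * (?G * (transpose_mat ?G * transpose_mat ?L))"
      by (rule assoc_mult_mat[of _ r r _ m _ r]) (auto intro: mult_carrier_mat[of _ m r])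
    also have "?G * (transpose_mat ?G * transpose_mat ?L) = (?G * transpose_mat ?G) * transpose_mat ?L"
      by (rule assoc_mult_mat[of _ r m _ r _ r, symmetric]) auto
    also have "?L * \<dots> = ?L * (?G * transpose_mat ?G) * transpose_mat ?L"
      by (rule assoc_mult_mat[of _ r r _ r _ r, symmetric]) (auto intro: mult_carrier_mat[of _ r m])
    finally show ?thesis .
  qed
  finally show ?thesis
    by (simp add: gs_mat_mult_transpose)
qed

lemma det_gs_coeff_mat: "det (gs_coeff_mat m r B) = 1"
proof -
  have "det (gs_coeff_mat m r B) = prod_list (diag_mat (gs_coeff_mat m r B))"
    by (rule det_lower_triangular[of r]) (auto simp: gs_coeff_mat_def gs_coeff_def)
  also have "\<dots> = 1"
    by (simp add: diag_mat_def gs_coeff_mat_def gs_coeff_def prod.distinct_set_conv_list[symmetric]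
        atLeast0LessThan)
  finally show ?thesis .
qed

lemma det_gs_sqnorm_mat: "det (gs_sqnorm_mat m r B) = (\<Prod>i<r. ip m (gs m B i) (gs m B i))"
proof -
  have "det (gs_sqnorm_mat m r B) = prod_list (diag_mat (gs_sqnorm_mat m r B))"
    by (rule det_upper_triangular[of _ r]) (auto simp: gs_sqnorm_mat_def upper_triangular_def)
  also have "\<dots> = (\<Prod>i<r. ip m (gs m B i) (gs m B i))"
    by (simp add: diag_mat_def gs_sqnorm_mat_def prod.distinct_set_conv_list[symmetric]
        atLeast0LessThan cong: map_cong)
  finally show ?thesis .
qed

lemma gram_det_eq_det: "gram_det m r B = det ((basis_mat m r B :: real mat) * transpose_mat (basis_mat m r B))"
proof -
  have carrier: "(basis_mat m r B :: real mat) * transpose_mat (basis_mat m r B) \<in> carrier_mat r r"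
    by (auto intro: mult_carrier_mat[of _ r m])
  have "ip m (rvec B i) (rvec B (p i))
      = ((basis_mat m r B :: real mat) * transpose_mat (basis_mat m r B)) $$ (i, p i)"
    if "p permutes {..<r}" "i < r" for p i
    using that permutes_in_image[of p "{..<r}" i]
    by (simp add: basis_mat_def ip_def rvec_def scalar_prod_def atLeast0LessThan)
  then show ?thesis
    unfolding gram_det_def det_def'[OF carrier] atLeast0LessThan
    by (intro sum.cong refl arg_cong2[where f = "(*)"] prod.cong) auto
qed

lemma gram_det_eq_prod_gs: "gram_det m r B = (\<Prod>i<r. ip m (gs m B i) (gs m B i))"
proof -
  let ?L = "gs_coeff_mat m r B" and ?D = "gs_sqnorm_mat m r B"
  have "gram_det m r B = det (?L * ?D) * det (transpose_mat ?L)"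
    unfolding gram_det_eq_det gram_mat_eq_LDL
    by (rule det_mult[of _ r]) (auto intro: mult_carrier_mat[of _ r r])
  also have "\<dots> = det ?D"
    by (simp add: det_mult[of _ r] det_transpose[of _ r] det_gs_coeff_mat)
  finally show ?thesis
    by (simp add: det_gs_sqnorm_mat)
qed

lemma rvec_sqnorm_eq_sum_gs:
  assumes "i < r"
  shows "ip m (rvec B i) (rvec B i) = (\<Sum>j<r. (gs_coeff m B i j)\<^sup>2 * ip m (gs m B j) (gs m B j))"
proof -
  let ?L = "gs_coeff_mat m r B" and ?D = "gs_sqnorm_mat m r B"
  have LD: "(?L * ?D) $$ (i, j) = gs_coeff m B i j * ip m (gs m B j) (gs m B j)" if "j < r" for j
    using assms that
    by (simp add: gs_coeff_mat_def gs_sqnorm_mat_def scalar_prod_def atLeast0LessThan if_distrib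
        cong: if_cong)
  have "ip m (rvec B i) (rvec B i) = ((basis_mat m r B :: real mat) * transpose_mat (basis_mat m r B)) $$ (i, i)"
    using assms by (simp add: basis_mat_def ip_def rvec_def scalar_prod_def atLeast0LessThan)
  also have "\<dots> = (?L * ?D * transpose_mat ?L) $$ (i, i)"
    by (simp only: gram_mat_eq_LDL)
  also have "\<dots> = (\<Sum>j<r. (?L * ?D) $$ (i, j) * ?L $$ (i, j))"
    using assms by (simp add: scalar_prod_def atLeast0LessThan gs_coeff_mat_def gs_sqnorm_mat_def)
  also have "\<dots> = (\<Sum>j<r. (gs_coeff m B i j)\<^sup>2 * ip m (gs m B j) (gs m B j))"
    using assms LD by (intro sum.cong) (auto simp: gs_coeff_mat_def power2_eq_square simp del: index_mult_mat)
  finally show ?thesis .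
qed

subsection \<open>Change of lattice basis\<close>

lemma gram_det_eq_of_int_det:
  "gram_det m r B = of_int (det ((basis_mat m r B :: int mat) * transpose_mat (basis_mat m r B)))"
proof -
  have "map_mat of_int ((basis_mat m r B :: int mat) * transpose_mat (basis_mat m r B))
      = (basis_mat m r B :: real mat) * transpose_mat (basis_mat m r B)"
    by (rule eq_matI) (auto simp: basis_mat_def scalar_prod_def)
  then show ?thesis
    by (metis gram_det_eq_det of_int_hom.hom_det)
qed

lemma gram_det_mult_left:
  fixes T :: "int mat"
  assumes T: "T \<in> carrier_mat r r" and B': "basis_mat m r B' = T * basis_mat m r B"
  shows "gram_det m r B' = (of_int (det T))\<^sup>2 * gram_det m r B"
proof -
  let ?A = "basis_mat m r B :: int mat"
  have A: "?A \<in> carrier_mat r m" and At: "transpose_mat ?A \<in> carrier_mat m r"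
    and Tt: "transpose_mat T \<in> carrier_mat r r"
    using T by auto
  have "basis_mat m r B' * transpose_mat (basis_mat m r B') = T * (?A * transpose_mat ?A) * transpose_mat T"
    using T A by (simp add: B' transpose_mult[OF T A] assoc_mult_mat[of _ r r _ m _ r]
        assoc_mult_mat[OF A At Tt, symmetric]
        assoc_mult_mat[OF T mult_carrier_mat[OF A At] Tt]
        mult_carrier_mat[of _ m r])
  then have "det (basis_mat m r B' * transpose_mat (basis_mat m r B'))
      = (det T)\<^sup>2 * det (?A * transpose_mat ?A)"
    using T by (simp add: det_mult[of _ r] det_transpose mult_carrier_mat[of _ r m] mult_carrier_mat[of _ r r]
        power2_eq_square)
  then show ?thesis
    by (simp add: gram_det_eq_of_int_det)
qed

text \<open>Pad \<open>X\<close> and \<open>Y\<close> with zeros to \<open>a \<times> a\<close> matrices; if \<open>b < a\<close>, row \<open>b\<close> of the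
  padded \<open>Y\<close> vanishes, contradicting \<open>det X' * det Y' = 1\<close>.\<close>
lemma le_if_mult_eq_id:
  fixes X Y :: "nat \<Rightarrow> nat \<Rightarrow> int"
  assumes XY: "\<forall>i<a. \<forall>l<a. (\<Sum>j<b. X i j * Y j l) = (if i = l then 1 else 0)"
  shows "a \<le> b"
proof (rule ccontr)
  assume "\<not> a \<le> b"
  then have ba: "b < a" by simp
  define X' where "X' = mat a a (\<lambda>(i, j). if j < b then X i j else 0)"
  define Y' where "Y' = mat a a (\<lambda>(i, j). if i < b then Y i j else 0)"
  have cX: "X' \<in> carrier_mat a a" and cY: "Y' \<in> carrier_mat a a"
    by (auto simp: X'_def Y'_def)
  have "X' * Y' = 1\<^sub>m a"
  proof (rule eq_matI)
    fix i l assume "i < dim_row (1\<^sub>m a)" "l < dim_col (1\<^sub>m a)"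
    then have il: "i < a" "l < a" by auto
    then have "(X' * Y') $$ (i, l)
        = (\<Sum>j\<in>{0..<a}. (if j < b then X i j else 0) * (if j < b then Y j l else 0))"
      by (simp add: X'_def Y'_def scalar_prod_def)
    also have "\<dots> = (\<Sum>j<b. X i j * Y j l)"
      using ba by (intro sum.mono_neutral_cong_right) auto
    finally show "(X' * Y') $$ (i, l) = 1\<^sub>m a $$ (i, l)"
      using XY il by simp
  qed (auto simp: X'_def Y'_def)
  then have "det X' * det Y' = 1"
    using det_mult[OF cX cY] by simp
  moreover have "det Y' = 0"
    unfolding det_def'[OF cY]
  proof (intro sum.neutral ballI)
    fix p assume "p \<in> {p. p permutes {0..<a}}"
    then have "p b < a"
      using permutes_in_image[of p "{0..<a}" b] ba by auto
    then have "(\<Prod>i = 0..<a. Y' $$ (i, p i)) = 0"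
      using ba by (intro prod_zero bexI[of _ b]) (auto simp: Y'_def)
    then show "signof p * (\<Prod>i = 0..<a. Y' $$ (i, p i)) = 0" by simp
  qed
  ultimately show False by simp
qed

lemma int_comb_coeffs_mult_eq_id:
  assumes A: "\<forall>i<a. A i = int_comb b A' (X i)" and A': "\<forall>j<b. A' j = int_comb a A (Y j)"
    and indep: "\<forall>c. int_comb a A c = (\<lambda>j. 0) \<longrightarrow> (\<forall>i<a. c i = 0)"
  shows "\<forall>i<a. \<forall>l<a. (\<Sum>j<b. X i j * Y j l) = (if i = l then 1 else 0)"
proof (intro allI impI)
  fix i l assume i: "i < a" and l: "l < a"
  define c where "c l = (\<Sum>j<b. X i j * Y j l) - (if i = l then 1 else 0)" for l
  have "int_comb a A c = (\<lambda>j. 0)"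
  proof
    fix k
    have "(\<Sum>l<a. (if i = l then 1 else 0) * A l k) = (\<Sum>l<a. if i = l then A l k else 0)"
      by (intro sum.cong) auto
    then have "int_comb a A c k
        = (\<Sum>l<a. (\<Sum>j<b. X i j * Y j l) * A l k) - (\<Sum>l<a. if i = l then A l k else 0)"
      by (simp add: int_comb_def c_def left_diff_distrib sum_subtractf)
    also have "(\<Sum>l<a. (\<Sum>j<b. X i j * Y j l) * A l k) = (\<Sum>j<b. X i j * (\<Sum>l<a. Y j l * A l k))"
      by (simp add: sum_distrib_left sum_distrib_right mult.assoc sum.swap[of _ "{..<a}"])
    also have "\<dots> = A i k"
      using A A' i by (simp add: int_comb_def)
    finally show "int_comb a A c k = 0"
      using i by simp
  qed
  then have "c l = 0"
    using indep l by blast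
  then show "(\<Sum>j<b. X i j * Y j l) = (if i = l then 1 else 0)"
    by (simp add: c_def)
qed

lemma lattice_basis_unique_rank_gram_det:
  assumes B: "is_lattice_basis L r B" and B': "is_lattice_basis L r' B'"
  shows "r' = r \<and> gram_det m r' B' = gram_det m r B"
proof -
  have "\<forall>i. \<exists>c. i < r' \<longrightarrow> B' i = int_comb r B c"
    using B B' unfolding is_lattice_basis_def by blast
  then obtain T where T: "\<forall>i<r'. B' i = int_comb r B (T i)" by metis
  have "\<forall>i. \<exists>c. i < r \<longrightarrow> B i = int_comb r' B' c"
    using B B' unfolding is_lattice_basis_def by blast
  then obtain U where U: "\<forall>i<r. B i = int_comb r' B' (U i)" by metis
  have UT: "\<forall>i<r. \<forall>l<r. (\<Sum>j<r'. U i j * T j l) = (if i = l then 1 else 0)"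
    using B unfolding is_lattice_basis_def by (intro int_comb_coeffs_mult_eq_id[OF U T]) blast
  have TU: "\<forall>i<r'. \<forall>l<r'. (\<Sum>j<r. T i j * U j l) = (if i = l then 1 else 0)"
    using B' unfolding is_lattice_basis_def by (intro int_comb_coeffs_mult_eq_id[OF T U]) blast
  have r: "r' = r"
    using le_if_mult_eq_id[OF UT] le_if_mult_eq_id[OF TU] by simp
  define TM where "TM = mat r r (\<lambda>(i, j). T i j)"
  define UM where "UM = mat r r (\<lambda>(i, j). U i j)"
  have TM: "TM \<in> carrier_mat r r" and UM: "UM \<in> carrier_mat r r"
    by (auto simp: TM_def UM_def)
  have "UM * TM = 1\<^sub>m r"
    using UT r by (intro eq_matI) (auto simp: UM_def TM_def scalar_prod_def atLeast0LessThan)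
  then have "det UM * det TM = 1"
    using det_mult[OF UM TM] by simp
  then have unimodular: "(det TM)\<^sup>2 = 1"
    by (auto simp: zmult_eq_1_iff power2_eq_square)
  have "basis_mat m r B' = TM * basis_mat m r B"
    using T r TM by (intro eq_matI) (auto simp: basis_mat_def TM_def scalar_prod_def atLeast0LessThan int_comb_def)
  then have "gram_det m r B' = (of_int (det TM))\<^sup>2 * gram_det m r B"
    by (rule gram_det_mult_left[OF TM])
  then show ?thesis
    using r unimodular by (simp flip: of_int_power)
qed

lemma lattice_det_eq_sqrt_gram_det:
  assumes "is_lattice_basis L r B"
  shows "lattice_det m L = sqrt (gram_det m r B)"
  unfolding lattice_det_def
proof (rule the_equality)
  show "\<exists>r' B'. is_lattice_basis L r' B' \<and> sqrt (gram_det m r B) = sqrt (gram_det m r' B')"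
    using assms by blast
next
  fix d assume "\<exists>r' B'. is_lattice_basis L r' B' \<and> d = sqrt (gram_det m r' B')"
  then show "d = sqrt (gram_det m r B)"
    using lattice_basis_unique_rank_gram_det[OF assms] by auto
qed

lemma is_lattice_basis_nonzero_entry:
  assumes B: "is_lattice_basis L r B" and support: "\<forall>w\<in>L. \<forall>k\<ge>m. w k = 0" and i: "i < r"
  shows "\<exists>k<m. B i k \<noteq> 0"
proof (rule ccontr)
  assume "\<not> (\<exists>k<m. B i k \<noteq> 0)"
  moreover have "B i \<in> L"
    using B i unfolding is_lattice_basis_def by blast
  ultimately have "B i k = 0" for k
    using support by (cases "k < m") auto
  then have zero: "B i = (\<lambda>k. 0)" ..
  define c where "c = (\<lambda>l. if l = i then 1 else (0::int))"
  have "int_comb r B c = B i"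
  proof
    fix k
    have "(\<Sum>l<r. c l * B l k) = (\<Sum>l<r. if l = i then B l k else 0)"
      by (intro sum.cong) (auto simp: c_def)
    then show "int_comb r B c k = B i k"
      using i by (simp add: int_comb_def)
  qed
  then have "c i = 0"
    using B i zero unfolding is_lattice_basis_def by metis
  then show False
    by (simp add: c_def)
qed

subsection \<open>Size of an LLL-reduced basis\<close>

lemma LLL_gs_mu_sq_le:
  assumes "LLL_reduced m r B" and "j < i" and "i < r"
  shows "(gs_mu m B i j)\<^sup>2 \<le> 1/4"
proof -
  have "\<bar>gs_mu m B i j\<bar> \<le> 1/2"
    using assms unfolding LLL_reduced_def by blast
  then have "\<bar>gs_mu m B i j\<bar>\<^sup>2 \<le> (1/2)\<^sup>2"
    by (intro power_mono) simp_all
  then show ?thesis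
    by (simp add: power2_abs power_divide)
qed

lemma LLL_gs_sqnorm_le_double:
  assumes LLL: "LLL_reduced m r B" and "Suc i < r"
  shows "ip m (gs m B i) (gs m B i) \<le> 2 * ip m (gs m B (Suc i)) (gs m B (Suc i))"
proof -
  let ?D = "\<lambda>k. ip m (gs m B k) (gs m B k)"
  have "?D (Suc i) \<ge> (3/4 - (gs_mu m B (Suc i) i)\<^sup>2) * ?D i"
    using LLL assms(2) unfolding LLL_reduced_def by (metis diff_Suc_1 zero_less_Suc)
  moreover have "(3/4 - (gs_mu m B (Suc i) i)\<^sup>2) * ?D i \<ge> 1/2 * ?D i"
    using LLL_gs_mu_sq_le[OF LLL lessI assms(2)] ip_self_nonneg[of m "gs m B i"]
    by (intro mult_right_mono) simp_all
  ultimately show ?thesis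
    by simp
qed

lemma LLL_gs_sqnorm_le:
  assumes LLL: "LLL_reduced m r B" and ji: "j \<le> i" and i: "i < r"
  shows "ip m (gs m B j) (gs m B j) \<le> 2 ^ (i - j) * ip m (gs m B i) (gs m B i)"
  using ji i
proof (induction i rule: dec_induct)
  case (step l)
  let ?D = "\<lambda>k. ip m (gs m B k) (gs m B k)"
  have "?D j \<le> 2 ^ (l - j) * ?D l"
    using step by simp
  also have "\<dots> \<le> 2 ^ (l - j) * (2 * ?D (Suc l))"
    using LLL_gs_sqnorm_le_double[OF LLL step.prems] by simp
  also have "\<dots> = 2 ^ (Suc l - j) * ?D (Suc l)"
    using step.hyps(1) by (simp add: Suc_diff_le)
  finally show ?case .
qed simp

lemma LLL_sqnorm_le_gs_sqnorm:
  assumes LLL: "LLL_reduced m r B" and i: "i < r"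
  shows "ip m (rvec B i) (rvec B i) \<le> 2 ^ i * ip m (gs m B i) (gs m B i)"
proof -
  let ?D = "\<lambda>k. ip m (gs m B k) (gs m B k)"
  have geometric: "(\<Sum>j<n. (2::real) ^ (n - j)) = 2 ^ (n + 1) - 2" for n
    by (induction n) (simp_all add: Suc_diff_le sum_distrib_left[symmetric])
  have "ip m (rvec B i) (rvec B i) = (\<Sum>j<r. (gs_coeff m B i j)\<^sup>2 * ?D j)"
    by (rule rvec_sqnorm_eq_sum_gs[OF i])
  also have "\<dots> = (\<Sum>j<Suc i. (gs_coeff m B i j)\<^sup>2 * ?D j)"
  proof (rule sum.mono_neutral_right)
    show "\<forall>j\<in>{..<r} - {..<Suc i}. (gs_coeff m B i j)\<^sup>2 * ?D j = 0"
      by (simp add: gs_coeff_def)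
  qed (use i in auto)
  also have "\<dots> = ?D i + (\<Sum>j<i. (gs_mu m B i j)\<^sup>2 * ?D j)"
    by (simp add: gs_coeff_def)
  finally have expand: "ip m (rvec B i) (rvec B i) = ?D i + (\<Sum>j<i. (gs_mu m B i j)\<^sup>2 * ?D j)" .
  have "(\<Sum>j<i. (gs_mu m B i j)\<^sup>2 * ?D j) \<le> (\<Sum>j<i. 1/4 * (2 ^ (i - j) * ?D i))"
    using LLL_gs_mu_sq_le[OF LLL _ i] LLL_gs_sqnorm_le[OF LLL _ i] ip_self_nonneg
    by (intro sum_mono mult_mono) auto
  also have "\<dots> = 1/4 * (\<Sum>j<i. (2::real) ^ (i - j)) * ?D i"
    by (simp add: sum_distrib_left sum_distrib_right mult_ac)
  also have "\<dots> = (2 ^ i - 1) / 2 * ?D i"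
    unfolding geometric by (simp add: field_simps)
  also have "\<dots> \<le> (2 ^ i - 1) * ?D i"
    using ip_self_nonneg[of m "gs m B i"] by (intro mult_right_mono) simp_all
  finally show ?thesis
    using expand by (simp add: algebra_simps)
qed

lemma LLL_sqnorm_le_gram_det:
  assumes LLL: "LLL_reduced m r B" and b0: "1 \<le> ip m (rvec B 0) (rvec B 0)" and i: "i < r"
  shows "ip m (rvec B i) (rvec B i) \<le> 2 ^ (\<Sum>k<r. k) * gram_det m r B"
proof -
  let ?E = "\<lambda>k. 2 ^ k * ip m (gs m B k) (gs m B k)"
  have E_ge_1: "1 \<le> ?E k" if "k < r" for k
    using b0 LLL_gs_sqnorm_le[OF LLL le0 that] unfolding gs_0 by simp
  have "ip m (rvec B i) (rvec B i) \<le> ?E i"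
    by (rule LLL_sqnorm_le_gs_sqnorm[OF LLL i])
  also have "\<dots> \<le> ?E i * (\<Prod>k\<in>{..<r} - {i}. ?E k)"
  proof -
    have "1 \<le> (\<Prod>k\<in>{..<r} - {i}. ?E k)"
      using E_ge_1 by (intro prod_ge_1) auto
    then show ?thesis
      using E_ge_1[OF i] by (intro mult_le_cancel_left1[THEN iffD2] disjI1) simp
  qed
  also have "\<dots> = (\<Prod>k<r. ?E k)"
    by (rule prod.remove[symmetric]) (use i in auto)
  also have "\<dots> = 2 ^ (\<Sum>k<r. k) * gram_det m r B"
    by (simp add: prod.distrib power_sum gram_det_eq_prod_gs)
  finally show ?thesis .
qed

lemma LLL_reduced_entry_bound:
  assumes LLL: "LLL_reduced m r B" and nonzero: "\<exists>k<m. B 0 k \<noteq> 0" and i: "i < r" and j: "j < m"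
  shows "real_of_int \<bar>B i j\<bar> \<le> 2 powr (real (r * (r - 1)) / 4) * sqrt (gram_det m r B)"
proof -
  obtain k where k: "k < m" "B 0 k \<noteq> 0"
    using nonzero by blast
  then have "1 \<le> \<bar>real_of_int (B 0 k)\<bar>"
    by linarith
  then have "1 \<le> (real_of_int (B 0 k))\<^sup>2"
    using abs_le_square_iff[of 1 "real_of_int (B 0 k)"] by simp
  then have b0: "1 \<le> ip m (rvec B 0) (rvec B 0)"
    using sq_le_ip_rvec[OF k(1), of B 0] by linarith
  have gauss: "2 * (\<Sum>k<n. k) = n * (n - 1)" for n :: nat
  proof (induction n)
    case (Suc n)
    then show ?case by (cases n) auto
  qed simp
  have half: "real (r * (r - 1)) / 2 = real (\<Sum>k<r. k)"
    unfolding gauss[symmetric] by simp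
  have "(2::real) ^ (\<Sum>k<r. k) = 2 powr (real (r * (r - 1)) / 2)"
    by (subst half) (rule powr_realpow[symmetric], simp)
  then have "(real_of_int (B i j))\<^sup>2 \<le> 2 powr (real (r * (r - 1)) / 2) * gram_det m r B"
    using sq_le_ip_rvec[OF j, of B i] LLL_sqnorm_le_gram_det[OF LLL b0 i] by simp
  then have "real_of_int \<bar>B i j\<bar> \<le> sqrt (2 powr (real (r * (r - 1)) / 2) * gram_det m r B)"
    by (intro real_le_rsqrt) simp
  also have "\<dots> = sqrt (2 powr (real (r * (r - 1)) / 2)) * sqrt (gram_det m r B)"
    by (rule real_sqrt_mult)
  also have "sqrt (2 powr (real (r * (r - 1)) / 2)) = 2 powr (real (r * (r - 1)) / 4)"
    by (subst powr_half_sqrt[symmetric]) (simp_all add: powr_powr)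
  finally show ?thesis .
qed

theorem proposition2p2:
  fixes K :: "'f::field set" and x :: 'f and q n :: nat
    and Ps :: "('f \<Rightarrow> int) list" and M :: "nat \<Rightarrow> nat \<Rightarrow> int"
  assumes K_subfield: "subfield K"
    and K_finite: "finite K" and K_card: "card K = q"
    and full_const: "\<forall>a. algebraic_over K a \<longrightarrow> a \<in> K"
    and x_transc: "\<not> algebraic_over K x"
    and degree: "has_degree_over (rat_fun_field K x) n"
    and coprime: "gcd n q = 1"
    and Ps_places: "\<forall>v\<in>set Ps. norm_val K v"
    and Ps_distinct: "distinct Ps"
    and Ps_infinite: "\<forall>v. norm_val K v \<and> v x < 0 \<longrightarrow> v \<in> set Ps"
    and M_basis: "is_lattice_basis (S_unit_val_lattice K Ps) (length Ps - 1) M"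
    and M_LLL: "LLL_reduced (length Ps) (length Ps - 1) M"
  shows "\<forall>i < length Ps - 1. \<forall>j < length Ps.
           real_of_int \<bar>M i j\<bar> \<le> 2 powr (real ((length Ps - 1) * (length Ps - 2)) / 4)
              * lattice_det (length Ps) (S_unit_val_lattice K Ps)"
proof (intro allI impI)
  fix i j assume i: "i < length Ps - 1" and j: "j < length Ps"
  have support: "\<forall>w\<in>S_unit_val_lattice K Ps. \<forall>k\<ge>length Ps. w k = 0"
    by (auto simp: S_unit_val_lattice_def phi_S_def)
  have "\<exists>k<length Ps. M 0 k \<noteq> 0"
    using is_lattice_basis_nonzero_entry[OF M_basis support] i by simp
  then have "real_of_int \<bar>M i j\<bar>
      \<le> 2 powr (real ((length Ps - 1) * (length Ps - 1 - 1)) / 4)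
        * sqrt (gram_det (length Ps) (length Ps - 1) M)"
    using LLL_reduced_entry_bound[OF M_LLL _ i j] by blast
  then show "real_of_int \<bar>M i j\<bar> \<le> 2 powr (real ((length Ps - 1) * (length Ps - 2)) / 4)
      * lattice_det (length Ps) (S_unit_val_lattice K Ps)"
    by (simp add: lattice_det_eq_sqrt_gram_det[OF M_basis] numeral_2_eq_2)
qed

end
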